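(* Fix a single institution with category capacities $q=(q^{o},q^{SC},q^{ST},q^{OBC},q^{EWS})$ of nonnegative integers, a finite set of individuals $\mathcal{I}$ with category memberships $t:\mathcal{I}\to\mathcal{R}\cup\{GC\}$ where $\mathcal{R}=\{SC,ST,OBC,EWS\}$, and a strict merit ranking $\succ$ (a linear order) over $\mathcal{I}$. A (category-assigning) choice rule $C$ satisfies within-category fairness, the over-and-above principle, and quota-filling subject to eligibility (all defined in the context) at every set of applicants $A\subseteq\mathcal{I}$ if and only if $C$ is the over-and-above choice rule $C^{OA}$, i.e. $C^{c}(A)=C^{OA,c}(A)$ for every $A\subseteq\mathcal{I}$ and every category $c\in\{o\}\cup\mathcal{R}$.
   Context: Categories of positions are $\mathcal{C}=\{o\}\cup\mathcal{R}$, where $o$ is the open category. Individuals with $t_i=GC$ (general category) are eligible only for open-category positions; an individual with $t_i=r\in\mathcal{R}$ is eligible for open-category positions and for category-$r$ positions. For $A\subseteq\mathcal{I}$ and $r\in\mathcal{R}$ let $A^{r}=\{i\in A: t_i=r\}$, and let $rank_A(i)=k$ iff $|\{j\in A: j\succ i\}|=k-1$. A choice rule $C$ assigns to each $A\subseteq\mathcal{I}$ pairwise disjoint sets $C^{o}(A),C^{SC}(A),C^{ST}(A),C^{OBC}(A),C^{EWS}(A)\subseteq A$ with $|C^{o}(A)|\le q^{o}$, and for each $r\in\mathcal{R}$, $C^{r}(A)\subseteq A^{r}$ and $|C^{r}(A)|\le q^{r}$; the chosen set is $C(A)=\bigcup_{c\in\mathcal{C}}C^{c}(A)$. An individual is "assigned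 a position" if she is in $C(A)$, and "assigned to a category-$c$ position" if she is in $C^{c}(A)$. Axioms (for a given $A$): Over-and-above principle: every $i\in A$ with $rank_A(i)\le q^{o}$ is in $C^{o}(A)$. Within-category fairness: for $i,j\in A$ with $t_i=t_j$ and $i\succ j$, if $j\in C(A)$ then $i\in C(A)$. Quota-filling subject to eligibility: for every $r\in\mathcal{R}$, if some $i\in A$ with $t_i=r$ is not in $C(A)$, then $|C^{r}(A)|=q^{r}$. Over-and-above choice rule $C^{OA}$: Stage 1: $C^{OA,o}(A)$ is the set of the $\min(q^{o},|A|)$ highest-ranked individuals of $A$ under $\succ$. Stage 2: with $A'=A\setminus C^{OA,o}(A)$, for each $r\in\mathcal{R}$, $C^{OA,r}(A)$ is the set of the $\min(q^{r},|A'^{r}|)$ highest-ranked individuals of $A'^{r}=\{i\in A': t_i=r\}$ under $\succ$. Then $C^{OA}(A)=C^{OA,o}(A)\cup\bigcup_{r\in\mathcal{R}}C^{OA,r}(A)$. *)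

theory Defs
  imports Main
begin

datatype rcat = SC | ST | OBC | EWS

datatype itype = GC | Res rcat

datatype category = Open | RC rcat

text \<open>Merit ranking: a strict linear order R on the individuals; (j,i) \<in> R means j \<succ> i.
  A choice rule: C A c is the set of individuals in A assigned to category-c positions.\<close>

definition rank :: "('i \<times> 'i) set \<Rightarrow> 'i set \<Rightarrow> 'i \<Rightarrow> nat" where
  "rank R A i = card {j \<in> A. (j, i) \<in> R} + 1"

definition of_type :: "('i \<Rightarrow> itype) \<Rightarrow> 'i set \<Rightarrow> rcat \<Rightarrow> 'i set" where
  "of_type t A r = {i \<in> A. t i = Res r}"

definition chosen :: "('i set \<Rightarrow> category \<Rightarrow> 'i set) \<Rightarrow> 'i set \<Rightarrow> 'i set" where
  "chosen C A = (\<Union>c. C A c)"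

definition is_choice_at ::
  "(category \<Rightarrow> nat) \<Rightarrow> ('i \<Rightarrow> itype) \<Rightarrow> ('i set \<Rightarrow> category \<Rightarrow> 'i set) \<Rightarrow> 'i set \<Rightarrow> bool" where
  "is_choice_at q t C A \<longleftrightarrow>
     (\<forall>c. C A c \<subseteq> A) \<and>
     (\<forall>c c'. c \<noteq> c' \<longrightarrow> C A c \<inter> C A c' = {}) \<and>
     card (C A Open) \<le> q Open \<and>
     (\<forall>r. C A (RC r) \<subseteq> of_type t A r \<and> card (C A (RC r)) \<le> q (RC r))"

definition over_and_above ::
  "(category \<Rightarrow> nat) \<Rightarrow> ('i \<times> 'i) set \<Rightarrow> ('i set \<Rightarrow> category \<Rightarrow> 'i set) \<Rightarrow> 'i set \<Rightarrow> bool" where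
  "over_and_above q R C A \<longleftrightarrow> (\<forall>i \<in> A. rank R A i \<le> q Open \<longrightarrow> i \<in> C A Open)"

definition within_category_fair ::
  "('i \<Rightarrow> itype) \<Rightarrow> ('i \<times> 'i) set \<Rightarrow> ('i set \<Rightarrow> category \<Rightarrow> 'i set) \<Rightarrow> 'i set \<Rightarrow> bool" where
  "within_category_fair t R C A \<longleftrightarrow>
     (\<forall>i \<in> A. \<forall>j \<in> A. t i = t j \<and> (i, j) \<in> R \<and> j \<in> chosen C A \<longrightarrow> i \<in> chosen C A)"

definition quota_filling ::
  "(category \<Rightarrow> nat) \<Rightarrow> ('i \<Rightarrow> itype) \<Rightarrow> ('i set \<Rightarrow> category \<Rightarrow> 'i set) \<Rightarrow> 'i set \<Rightarrow> bool" where
  "quota_filling q t C A \<longleftrightarrow>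
     (\<forall>r. (\<exists>i \<in> A. t i = Res r \<and> i \<notin> chosen C A) \<longrightarrow> card (C A (RC r)) = q (RC r))"

text \<open>The k highest-ranked individuals of B (all of B if |B| < k), i.e. those of rank \<le> k.\<close>
definition top :: "('i \<times> 'i) set \<Rightarrow> nat \<Rightarrow> 'i set \<Rightarrow> 'i set" where
  "top R k B = {i \<in> B. rank R B i \<le> k}"

definition C_OA ::
  "(category \<Rightarrow> nat) \<Rightarrow> ('i \<Rightarrow> itype) \<Rightarrow> ('i \<times> 'i) set \<Rightarrow> 'i set \<Rightarrow> category \<Rightarrow> 'i set" where
  "C_OA q t R A c =
     (case c of
        Open \<Rightarrow> top R (q Open) A
      | RC r \<Rightarrow> top R (q (RC r)) (of_type t (A - top R (q Open) A) r))"

end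

theory Submission imports Defs begin

(* Under a strict linear order the ranks of the members of a finite set B are exactly 1, ..., |B|,
   so top R k B has min k |B| elements and is closed upwards in B; it is therefore the only upward
   closed subset of B of that size, and the only subset of B of size at most k containing it.
   The over-and-above principle puts top R q^o A into the open positions, so by capacity it is
   all of them. An individual of type r outside the open positions can only hold an r position;
   within-category fairness makes the r positions an upward closed part of the remaining type-r
   pool, and quota filling forces its size to min q^r |pool|, so it is the top of that pool. *)

lemma rank_less_rank:
  assumes "trans R" "irrefl R" "finite B" "i \<in> B" "(i, j) \<in> R"
  shows "rank R B i < rank R B j"
proof -
  have "{k \<in> B. (k, i) \<in> R} \<subset> {k \<in> B. (k, j) \<in> R}"
    using assms by (auto simp: irrefl_def dest: transD)
  then show ?thesis
    unfolding rank_def using \<open>finite B\<close> by (simp add: psubset_card_mono)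
qed

lemma rank_le_card:
  assumes "irrefl R" "finite B" "i \<in> B"
  shows "rank R B i \<le> card B"
proof -
  have "{k \<in> B. (k, i) \<in> R} \<subseteq> B - {i}"
    using assms by (auto simp: irrefl_def)
  then have "card {k \<in> B. (k, i) \<in> R} < card B"
    using assms by (meson card_Diff1_less card_mono finite_Diff le_less_trans)
  then show ?thesis
    unfolding rank_def by simp
qed

lemma inj_on_rank:
  assumes "trans R" "irrefl R" "total_on B R" "finite B"
  shows "inj_on (rank R B) B"
proof (rule inj_onI)
  fix x y
  assume "x \<in> B" "y \<in> B" "rank R B x = rank R B y"
  then show "x = y"
    using assms rank_less_rank[OF assms(1,2,4)] unfolding total_on_def by (metis less_irrefl)
qed

lemma rank_image:
  assumes "trans R" "irrefl R" "total_on B R" "finite B"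
  shows "rank R B ` B = {1..card B}"
proof (rule card_subset_eq)
  show "rank R B ` B \<subseteq> {1..card B}"
    using rank_le_card[OF assms(2,4)] by (auto simp: rank_def)
  show "card (rank R B ` B) = card {1..card B}"
    using card_image[OF inj_on_rank[OF assms]] by simp
qed simp

lemma top_subset: "top R k B \<subseteq> B"
  by (auto simp: top_def)

lemma card_top:
  assumes "trans R" "irrefl R" "total_on B R" "finite B"
  shows "card (top R k B) = min k (card B)"
proof -
  have "rank R B ` top R k B = {n \<in> rank R B ` B. n \<le> k}"
    unfolding top_def by auto
  also have "\<dots> = {1..min k (card B)}"
    unfolding rank_image[OF assms] by auto
  finally have "rank R B ` top R k B = {1..min k (card B)}" .
  moreover have "inj_on (rank R B) (top R k B)"
    using inj_on_rank[OF assms] top_subset by (rule inj_on_subset)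
  ultimately show ?thesis
    by (metis card_atLeastAtMost card_image diff_Suc_1)
qed

lemma card_top_eq_if_not_in_top:
  assumes "trans R" "irrefl R" "total_on B R" "finite B" "i \<in> B" "i \<notin> top R k B"
  shows "card (top R k B) = k"
proof -
  have "k < card B"
    using rank_le_card[OF assms(2,4,5)] assms(5,6) by (auto simp: top_def)
  then show ?thesis
    using card_top[OF assms(1-4)] by simp
qed

lemma top_upward_closed:
  assumes "trans R" "irrefl R" "finite B"
    and "i \<in> B" "j \<in> top R k B" "(i, j) \<in> R"
  shows "i \<in> top R k B"
  using rank_less_rank[OF assms(1-4,6)] assms(4,5) by (simp add: top_def)

lemma superset_of_top_eq_top:
  assumes "trans R" "irrefl R" "total_on B R" "finite B"
    and "top R k B \<subseteq> X" "X \<subseteq> B" "card X \<le> k"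
  shows "X = top R k B"
proof -
  have "card X \<le> card (top R k B)"
    using card_top[OF assms(1-4)] card_mono[OF assms(4,6)] assms(7) by simp
  then show ?thesis
    using card_seteq[OF finite_subset[OF assms(6,4)] assms(5)] by simp
qed

lemma upward_closed_eq_top:
  assumes "trans R" "irrefl R" "total_on B R" "finite B" "U \<subseteq> B"
    and upward_closed: "\<forall>i \<in> B. \<forall>j \<in> U. (i, j) \<in> R \<longrightarrow> i \<in> U"
    and card_U: "card U = min k (card B)"
  shows "U = top R k B"
proof -
  have "finite U"
    using assms(4,5) by (rule finite_subset[rotated])
  have "U \<subseteq> top R k B"
  proof
    fix j
    assume "j \<in> U"
    have "{i \<in> B. (i, j) \<in> R} \<subseteq> U - {j}"
      using upward_closed \<open>j \<in> U\<close> \<open>irrefl R\<close> by (auto simp: irrefl_def)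
    then have "card {i \<in> B. (i, j) \<in> R} \<le> card (U - {j})"
      using \<open>finite U\<close> by (intro card_mono) auto
    also have "\<dots> < card U"
      using \<open>finite U\<close> \<open>j \<in> U\<close> by (rule card_Diff1_less)
    finally have "card {i \<in> B. (i, j) \<in> R} < card U" .
    then show "j \<in> top R k B"
      using card_U \<open>j \<in> U\<close> \<open>U \<subseteq> B\<close> by (auto simp: top_def rank_def)
  qed
  moreover have "card (top R k B) \<le> card U"
    using card_top[OF assms(1-4)] card_U by simp
  moreover have "finite (top R k B)"
    using \<open>finite B\<close> top_subset by (rule finite_subset[rotated])
  ultimately show ?thesis
    by (metis card_seteq)
qed

lemma C_OA_Open [simp]: "C_OA q t R A Open = top R (q Open) A"
  by (simp add: C_OA_def)

lemma C_OA_RC [simp]: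
  "C_OA q t R A (RC r) = top R (q (RC r)) (of_type t (A - top R (q Open) A) r)"
  by (simp add: C_OA_def)

lemma mem_of_type [simp]: "i \<in> of_type t A r \<longleftrightarrow> i \<in> A \<and> t i = Res r"
  by (simp add: of_type_def)

lemma mem_chosen: "i \<in> chosen C A \<longleftrightarrow> (\<exists>c. i \<in> C A c)"
  by (simp add: chosen_def)

lemma over_and_above_C_OA: "over_and_above q R (C_OA q t R) A"
  by (auto simp: over_and_above_def top_def)

lemma within_category_fair_C_OA:
  assumes "trans R" "irrefl R" "finite A"
  shows "within_category_fair t R (C_OA q t R) A"
  unfolding within_category_fair_def
proof (intro ballI impI)
  fix i j
  assume "i \<in> A" "j \<in> A" and ij: "t i = t j \<and> (i, j) \<in> R \<and> j \<in> chosen (C_OA q t R) A"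
  then obtain c where j_c: "j \<in> C_OA q t R A c"
    by (auto simp: mem_chosen)
  show "i \<in> chosen (C_OA q t R) A"
  proof (cases "i \<in> top R (q Open) A")
    case True
    then show ?thesis
      by (metis C_OA_Open mem_chosen)
  next
    case i_not_open: False
    show ?thesis
    proof (cases c)
      case Open
      then show ?thesis
        using top_upward_closed[OF assms \<open>i \<in> A\<close>] j_c ij i_not_open by auto
    next
      case (RC r)
      let ?B = "of_type t (A - top R (q Open) A) r"
      have "j \<in> ?B"
        using j_c RC by (auto simp: top_def)
      then have "i \<in> ?B"
        using \<open>i \<in> A\<close> ij i_not_open by simp
      moreover have "finite ?B"
        using \<open>finite A\<close> by (simp add: of_type_def)
      ultimately have "i \<in> C_OA q t R A (RC r)"
        using top_upward_closed[OF assms(1,2)] j_c RC ij by auto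
      then show ?thesis
        unfolding mem_chosen by blast
    qed
  qed
qed

lemma quota_filling_C_OA:
  assumes "trans R" "irrefl R" "total_on A R" "finite A"
  shows "quota_filling q t (C_OA q t R) A"
  unfolding quota_filling_def
proof (intro allI impI)
  fix r
  assume "\<exists>i \<in> A. t i = Res r \<and> i \<notin> chosen (C_OA q t R) A"
  then obtain i where "i \<in> A" "t i = Res r"
    and not_chosen: "\<And>c. i \<notin> C_OA q t R A c"
    by (auto simp: mem_chosen)
  let ?B = "of_type t (A - top R (q Open) A) r"
  have "i \<in> ?B"
    using \<open>i \<in> A\<close> \<open>t i = Res r\<close> not_chosen[of Open] by simp
  moreover have "finite ?B" "total_on ?B R"
    using assms(3,4) by (auto simp: of_type_def total_on_def)
  ultimately show "card (C_OA q t R A (RC r)) = q (RC r)"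
    using card_top_eq_if_not_in_top[OF assms(1,2)] not_chosen[of "RC r"] by simp
qed

lemma open_positions_eq_top:
  assumes "trans R" "irrefl R" "total_on A R" "finite A"
    and "is_choice_at q t C A" "over_and_above q R C A"
  shows "C A Open = top R (q Open) A"
proof (rule superset_of_top_eq_top[OF assms(1-4)])
  show "top R (q Open) A \<subseteq> C A Open"
    using assms(6) unfolding over_and_above_def top_def by blast
qed (use assms(5) in \<open>auto simp: is_choice_at_def\<close>)

lemma reserve_positions_eq_top:
  assumes "trans R" "irrefl R" "total_on A R" "finite A"
    and choice: "is_choice_at q t C A"
    and fair: "within_category_fair t R C A" and "over_and_above q R C A"
    and quota: "quota_filling q t C A"
  shows "C A (RC r) = top R (q (RC r)) (of_type t (A - top R (q Open) A) r)"
proof (rule upward_closed_eq_top[OF assms(1,2)])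
  let ?B = "of_type t (A - top R (q Open) A) r"
  have open_eq: "C A Open = top R (q Open) A"
    using open_positions_eq_top[OF assms(1-4) choice \<open>over_and_above q R C A\<close>] .
  have disjoint: "C A (RC r) \<inter> C A Open = {}" and card_le: "card (C A (RC r)) \<le> q (RC r)"
    and eligible: "\<And>r'. C A (RC r') \<subseteq> of_type t A r'"
    using choice unfolding is_choice_at_def by auto
  show "finite ?B" "total_on ?B R"
    using assms(3,4) by (auto simp: of_type_def total_on_def)
  show "C A (RC r) \<subseteq> ?B"
    using eligible[of r] disjoint open_eq unfolding of_type_def by blast
  have chosen_in_pool: "i \<in> C A (RC r)" if "i \<in> ?B" "i \<in> chosen C A" for i
  proof -
    obtain c where "i \<in> C A c"
      using \<open>i \<in> chosen C A\<close> by (auto simp: mem_chosen)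
    moreover have "c \<noteq> Open"
      using \<open>i \<in> C A c\<close> \<open>i \<in> ?B\<close> open_eq by auto
    moreover have "r' = r" if "c = RC r'" for r'
      using that \<open>i \<in> C A c\<close> \<open>i \<in> ?B\<close> eligible[of r'] by (force simp: of_type_def)
    ultimately show ?thesis
      by (metis category.exhaust)
  qed
  show "\<forall>i \<in> ?B. \<forall>j \<in> C A (RC r). (i, j) \<in> R \<longrightarrow> i \<in> C A (RC r)"
  proof (intro ballI impI)
    fix i j
    assume "i \<in> ?B" "j \<in> C A (RC r)" "(i, j) \<in> R"
    then have "j \<in> ?B" "j \<in> chosen C A"
      using \<open>C A (RC r) \<subseteq> ?B\<close> by (auto simp: mem_chosen)
    then have "i \<in> chosen C A"
      using fair \<open>i \<in> ?B\<close> \<open>(i, j) \<in> R\<close> unfolding within_category_fair_def by auto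
    then show "i \<in> C A (RC r)"
      using chosen_in_pool \<open>i \<in> ?B\<close> by blast
  qed
  show "card (C A (RC r)) = min (q (RC r)) (card ?B)"
  proof (cases "C A (RC r) = ?B")
    case True
    then show ?thesis
      using card_le by simp
  next
    case False
    then obtain i where "i \<in> ?B" "i \<notin> C A (RC r)"
      using \<open>C A (RC r) \<subseteq> ?B\<close> by blast
    then have "card (C A (RC r)) = q (RC r)"
      using quota chosen_in_pool unfolding quota_filling_def by auto
    moreover have "card (C A (RC r)) \<le> card ?B"
      using \<open>C A (RC r) \<subseteq> ?B\<close> \<open>finite ?B\<close> by (rule card_mono[rotated])
    ultimately show ?thesis
      by simp
  qed
qed

lemma axioms_iff_C_OA:
  assumes "strict_linear_order_on A R" "finite A" "is_choice_at q t C A"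
  shows "within_category_fair t R C A \<and> over_and_above q R C A \<and> quota_filling q t C A
    \<longleftrightarrow> C A = C_OA q t R A"
proof -
  have order: "trans R" "irrefl R" "total_on A R"
    using assms(1) unfolding strict_linear_order_on_def by auto
  show ?thesis
  proof
    assume "within_category_fair t R C A \<and> over_and_above q R C A \<and> quota_filling q t C A"
    then show "C A = C_OA q t R A"
      using open_positions_eq_top[OF order assms(2,3)] reserve_positions_eq_top[OF order assms(2,3)]
      by (metis C_OA_Open C_OA_RC category.exhaust ext)
  next
    assume "C A = C_OA q t R A"
    moreover have "within_category_fair t R (C_OA q t R) A" "quota_filling q t (C_OA q t R) A"
      using within_category_fair_C_OA quota_filling_C_OA order assms(2) by blast+
    ultimately show "within_category_fair t R C A \<and> over_and_above q R C A \<and> quota_filling q t C A"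
      using over_and_above_C_OA
      unfolding within_category_fair_def over_and_above_def quota_filling_def chosen_def by simp
  qed
qed

theorem theorem1:
  fixes I :: "'i set" and t :: "'i \<Rightarrow> itype" and R :: "('i \<times> 'i) set"
    and q :: "category \<Rightarrow> nat" and C :: "'i set \<Rightarrow> category \<Rightarrow> 'i set"
  assumes "finite I"
    and "strict_linear_order_on I R"
    and "R \<subseteq> I \<times> I"
    and "\<forall>A \<subseteq> I. is_choice_at q t C A"
  shows "(\<forall>A \<subseteq> I. within_category_fair t R C A \<and> over_and_above q R C A \<and> quota_filling q t C A)
         \<longleftrightarrow> (\<forall>A \<subseteq> I. \<forall>c. C A c = C_OA q t R A c)"
proof -
  have "within_category_fair t R C A \<and> over_and_above q R C A \<and> quota_filling q t C A
    \<longleftrightarrow> (\<forall>c. C A c = C_OA q t R A c)" if "A \<subseteq> I" for A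
  proof -
    have "strict_linear_order_on A R" "finite A"
      using assms(1,2) that unfolding strict_linear_order_on_def
      by (auto intro: total_on_subset finite_subset)
    then show ?thesis
      using axioms_iff_C_OA[of A R q t C] assms(4) that by (simp add: fun_eq_iff)
  qed
  then show ?thesis
    by (simp cong: imp_cong)
qed

end
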